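(* Let $n\ge1$ and $U>0$. Consider the latent affine nonlinear dynamic system $$\boldsymbol{z}^{t+1}=\boldsymbol{A}(\boldsymbol{z}^t)\boldsymbol{z}^t+\boldsymbol{B}(\boldsymbol{z}^t)u^t,\qquad \boldsymbol{x}^t=g(\boldsymbol{z}^t),$$ where $\boldsymbol{z}^t\in\mathbb{R}^n$, $u^t\in(-U,U)$, $\boldsymbol{A}(\boldsymbol{z})\in\mathbb{R}^{n\times n}$ has first $n-1$ rows $\boldsymbol{e}_2^T,\dots,\boldsymbol{e}_n^T$ and last row $(a_1(\boldsymbol{z}),\dots,a_n(\boldsymbol{z}))$, $\boldsymbol{B}(\boldsymbol{z})=(0,\dots,0,b(\boldsymbol{z}))^T$, and $g:\mathbb{R}^n\to\mathcal{X}\subset\mathbb{R}^m$ ($m\ge n$) is an unknown injective differentiable function. Assume the coefficient functions $a_1,\dots,a_n,b:\mathbb{R}^n\to\mathbb{R}$ are differentiable and bounded, $|a_1(\cdot)|\ge h_a>0$ and $|b(\cdot)|\ge h_b>0$ for some constants $h_a,h_b$, and that the equation $\boldsymbol{c}=\boldsymbol{A}(\boldsymbol{c})\boldsymbol{c}$ has the unique solution $\boldsymbol{c}=\boldsymbol{0}$. Let $f:\mathcal{X}\to\mathbb{R}^n$ be a differentiable encoder and let $\boldsymbol{\hat A}(\cdot),\boldsymbol{\hat B}(\cdot)$ have the same structure as $\boldsymbol{A}(\cdot),\boldsymbol{B}(\cdot)$ with differentiable coefficient functions $\hat a_1,\dots,\hat a_n,\hat b$, and suppose $(f,\boldsymbol{\hat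 A},\boldsymbol{\hat B})$ solves $$\min_{\boldsymbol{\hat A}(\cdot),\boldsymbol{\hat B}(\cdot),f}\ \mathbb{E}\big[\|f(\boldsymbol{x}^{t+1})-\boldsymbol{\hat A}(f(\boldsymbol{x}^t))f(\boldsymbol{x}^t)-\boldsymbol{\hat B}(f(\boldsymbol{x}^t))u^t\|^2\big]\quad\text{s.t. } |\hat b(\cdot)|\ge \hat h_b>0,$$ for an arbitrary positive constant $\hat h_b$, where the expectation is taken over all states $\boldsymbol{z}^t\in\mathbb{R}^n$ and all admissible inputs $u^t$ (with unknown distributions), $\boldsymbol{x}^t=g(\boldsymbol{z}^t)$ and $\boldsymbol{x}^{t+1}=g(\boldsymbol{z}^{t+1})$. Let $\tau=f\circ g$. Then there is a nonzero constant $\Delta b\in\mathbb{R}$ such that for all $\boldsymbol{z}\in\mathbb{R}^n$, writing $\boldsymbol{\hat z}=\tau(\boldsymbol{z})$: $\boldsymbol{\hat z}=\tau(\boldsymbol{z})=\Delta b\cdot\boldsymbol{z}$, $\boldsymbol{\hat A}(\boldsymbol{\hat z})\boldsymbol{\hat z}=\Delta b\,\boldsymbol{A}(\boldsymbol{z})\boldsymbol{z}$, and $\hat b(\boldsymbol{\hat z})=\Delta b\cdot b(\boldsymbol{z})$.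
   Context: This is the system $q^{t+n}-a_n(\boldsymbol{z}^t)q^{t+n-1}-\cdots-a_1(\boldsymbol{z}^t)q^t=b(\boldsymbol{z}^t)u^t$ with $\boldsymbol{z}^t=(q^t,\dots,q^{t+n-1})^T$, in controllable canonical form; the order $n$ is known. The input can be set to any admissible value at any state. *)

theory Defs
  imports "HOL-Analysis.Analysis"
begin

text \<open>State space R^n is rendered as real^'n for a finite linearly ordered index
type 'n (n = CARD('n) >= 1 automatically).  Coordinates are ordered by the linear
order of 'n; pos i in {0..n-1} is the position of index i.\<close>

definition pos :: "'n::{finite,linorder} \<Rightarrow> nat" where
  "pos i = card {j. j < i}"

text \<open>First index (coordinate 1) and the controllable canonical (companion) matrix
whose first n-1 rows are e_2^T,...,e_n^T and whose last row is (a_1,...,a_n),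
where a j is the coefficient in column j.\<close>

definition first_idx :: "'n::{finite,linorder}" where
  "first_idx = Min UNIV"

definition companion :: "('n::{finite,linorder} \<Rightarrow> real) \<Rightarrow> real^'n::{finite,linorder}^'n::{finite,linorder}" where
  "companion a = (\<chi> i j. if pos i + 1 < CARD('n)
                           then (if pos j = pos i + 1 then 1 else 0)
                           else a j)"

definition lastvec :: "real \<Rightarrow> real^'n::{finite,linorder}" where
  "lastvec b = (\<chi> i. if pos i + 1 = CARD('n) then b else 0)"

end

theory Submission
  imports Defs
begin

(*
  Write the latent step as z \<mapsto> shift z s: the first coordinate of z is dropped and
  s = \<Sum>j. a_j(z) z_j + u b(z) is appended.  Zero loss says that T = f \<circ> g conjugates this
  step to the learned one.  The inputs u b(z) fill an interval of radius U h_b around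
  \<Sum>j. a_j(z) z_j, and since |a_1| \<ge> h_a while the other a_j are bounded, this sum can be
  given any value by moving only the discarded first coordinate.  Hence every coordinate of T(shift z s) except the last is
  locally constant in s, so T(shift w s)_i = T(w)_(i+1); inductively T acts coordinatewise
  by a single function \<psi>.  On the last coordinate the conjugacy says \<psi> is affine on every
  interval of radius U h_b with slope bh/b, so \<psi> is affine with a constant slope \<Delta>b \<noteq> 0;
  the offset vanishes because 0 is the only fixed point of the latent dynamics.
*)

lemma uniformly_locally_constant_imp_constant:
  fixes \<phi> :: "'a::real_normed_vector \<Rightarrow> 'b"
  assumes "r > 0" and "\<And>x v. norm v < r \<Longrightarrow> \<phi> (x + v) = \<phi> x"
  shows "\<phi> x = \<phi> y"
proof (rule connected_local_const[OF connected_UNIV], simp_all)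
  show "\<forall>x. eventually (\<lambda>y. \<phi> x = \<phi> y) (at x)"
  proof
    fix x
    have "\<phi> x = \<phi> y" if "dist y x < r" for y
      using assms(2)[of "y - x" x] that by (simp add: dist_norm)
    then show "eventually (\<lambda>y. \<phi> x = \<phi> y) (at x)"
      unfolding eventually_at using \<open>r > 0\<close> by blast
  qed
qed

lemma uniformly_locally_affine_imp_affine:
  fixes \<phi> :: "real \<Rightarrow> real"
  assumes r: "r > 0" and loc: "\<And>x. \<exists>\<beta>. \<forall>v. \<bar>v\<bar> < r \<longrightarrow> \<phi> (x + v) = \<phi> x + \<beta> * v"
  shows "\<exists>k d. \<forall>x. \<phi> x = k * x + d"
proof -
  have "\<forall>x. \<exists>\<beta>. \<forall>v. \<bar>v\<bar> < r \<longrightarrow> \<phi> (x + v) = \<phi> x + \<beta> * v"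
    using loc by blast
  then obtain \<beta> where \<beta>: "\<And>x v. \<bar>v\<bar> < r \<Longrightarrow> \<phi> (x + v) = \<phi> x + \<beta> x * v"
    by (auto dest!: choice)
  have \<beta>_loc: "\<beta> (x + w) = \<beta> x" if w: "norm w < r/2" for x w
  proof -
    have "\<phi> (x + w + r/4) = \<phi> (x + w) + \<beta> (x + w) * (r/4)" using \<beta>[of "r/4" "x + w"] r by simp
    moreover have "\<phi> (x + (w + r/4)) = \<phi> x + \<beta> x * (w + r/4)" using \<beta>[of "w + r/4" x] w r by simp
    moreover have "\<phi> (x + w) = \<phi> x + \<beta> x * w" using \<beta>[of w x] w r by simp
    ultimately have "\<beta> (x + w) * (r/4) = \<beta> x * (r/4)" by (simp add: algebra_simps)
    with r show ?thesis by simp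
  qed
  have \<beta>_const: "\<beta> x = \<beta> 0" for x
    by (rule uniformly_locally_constant_imp_constant[of "r/2" \<beta>]) (use r \<beta>_loc in auto)
  have affine: "\<phi> x - \<beta> 0 * x = \<phi> 0 - \<beta> 0 * 0" for x
  proof (rule uniformly_locally_constant_imp_constant[OF r, of "\<lambda>x. \<phi> x - \<beta> 0 * x"])
    fix x v :: real assume "norm v < r"
    then show "\<phi> (x + v) - \<beta> 0 * (x + v) = \<phi> x - \<beta> 0 * x"
      using \<beta>[of v x] \<beta>_const[of x] by (simp add: algebra_simps)
  qed
  have "\<phi> x = \<beta> 0 * x + \<phi> 0" for x using affine[of x] by simp
  then show ?thesis by blast
qed

lemma continuous_abs_ge_imp_constant_sign:
  fixes A :: "'a::topological_space \<Rightarrow> real"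
  assumes "connected S" "continuous_on S A" and "\<And>t. t \<in> S \<Longrightarrow> \<bar>A t\<bar> \<ge> h" and "h > 0"
  shows "(\<forall>t\<in>S. A t \<ge> h) \<or> (\<forall>t\<in>S. A t \<le> - h)"
proof (rule ccontr)
  assume "\<not> ?thesis"
  then obtain x y where "x \<in> S" "y \<in> S" "A y < h" "A x > - h" by force
  with assms(3,4) have "A x \<ge> h" "A y \<le> - h" by (smt (verit))+
  with \<open>x \<in> S\<close> \<open>y \<in> S\<close> have "0 \<in> A ` S"
    using connectedD_interval[OF connected_continuous_image[OF assms(2,1)], of "A y" "A x" 0]
    using \<open>h > 0\<close> by auto
  with assms(3,4) show False by force
qed

lemma continuous_coercive_surj:
  fixes A R :: "real \<Rightarrow> real"
  assumes cont: "continuous_on UNIV A" "continuous_on UNIV R"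
    and h: "h > 0" "\<And>t. \<bar>A t\<bar> \<ge> h" and M: "\<And>t. \<bar>R t\<bar> \<le> M"
  shows "\<exists>t. A t * t + R t = s"
proof -
  have pos: "\<exists>t. A t * t + R t = s"
    if cont: "continuous_on UNIV A" "continuous_on UNIV R"
      and A: "\<And>t. A t \<ge> h" and M: "\<And>t. \<bar>R t\<bar> \<le> M" for A R s
  proof -
    define t0 where "t0 = (\<bar>s\<bar> + M) / h"
    have "t0 \<ge> 0" using M[of 0] h by (simp add: t0_def)
    have ht0: "h * t0 = \<bar>s\<bar> + M" using h by (simp add: t0_def)
    have "h * t0 \<le> A t0 * t0" "h * t0 \<le> A (- t0) * t0"
      using A \<open>t0 \<ge> 0\<close> by (simp_all add: mult_right_mono)
    moreover have "- M \<le> R t" "R t \<le> M" for t using M[of t] by linarith+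
    ultimately have "A (- t0) * - t0 + R (- t0) \<le> s" "s \<le> A t0 * t0 + R t0"
      using ht0 by (smt (verit) mult_minus_right)+
    moreover have "connected (range (\<lambda>t. A t * t + R t))"
      by (intro connected_continuous_image connected_UNIV continuous_intros cont)
    ultimately show ?thesis
      using connectedD_interval[of "range (\<lambda>t. A t * t + R t)"] by blast
  qed
  consider "\<And>t. A t \<ge> h" | "\<And>t. A t \<le> - h"
    using continuous_abs_ge_imp_constant_sign[OF connected_UNIV cont(1) h(2) h(1)] by blast
  then show ?thesis
  proof cases
    case 1
    then show ?thesis using pos[OF cont] M by blast
  next
    case 2
    have "continuous_on UNIV (\<lambda>t. - A t)" "continuous_on UNIV (\<lambda>t. - R t)"
      using cont by (auto intro: continuous_intros)
    moreover have "- A t \<ge> h" "\<bar>- R t\<bar> \<le> M" for t using 2 M by (simp_all add: le_minus_iff)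
    ultimately obtain t where "- A t * t + - R t = - s" using pos by blast
    then show ?thesis by (intro exI[of _ t]) linarith
  qed
qed

lemma exists_coordinate_solution:
  fixes a :: "'n::finite \<Rightarrow> real^'n::finite \<Rightarrow> real"
  assumes cont: "\<And>j. continuous_on UNIV (a j)" and bdd: "\<And>j. bounded (range (a j))"
    and h: "h > 0" "\<And>z. \<bar>a i z\<bar> \<ge> h"
  shows "\<exists>z. (\<Sum>j\<in>UNIV. a j z * z $ j) = s \<and> (\<forall>j. j \<noteq> i \<longrightarrow> z $ j = w $ j)"
proof -
  define zt where "zt t = w + (t - w $ i) *\<^sub>R axis i 1" for t
  have zt_nth: "zt t $ j = (if j = i then t else w $ j)" for t j
    by (simp add: zt_def axis_def)
  define R where "R t = (\<Sum>j\<in>UNIV - {i}. a j (zt t) * w $ j)" for t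
  have sum_eq: "(\<Sum>j\<in>UNIV. a j (zt t) * zt t $ j) = a i (zt t) * t + R t" for t
  proof -
    have "(\<Sum>j\<in>UNIV. a j (zt t) * zt t $ j)
        = a i (zt t) * zt t $ i + (\<Sum>j\<in>UNIV - {i}. a j (zt t) * zt t $ j)"
      by (rule sum.remove) auto
    also have "(\<Sum>j\<in>UNIV - {i}. a j (zt t) * zt t $ j) = R t"
      unfolding R_def by (rule sum.cong) (auto simp: zt_nth)
    finally show ?thesis by (simp add: zt_nth)
  qed
  have "continuous_on UNIV zt"
    unfolding zt_def by (intro continuous_intros)
  then have a_cont: "continuous_on UNIV (\<lambda>t. a j (zt t))" for j
    using continuous_on_compose2[OF cont] by blast
  obtain B where B: "\<And>j z. \<bar>a j z\<bar> \<le> B j"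
    using bdd unfolding bounded_iff by (metis real_norm_def rangeI)
  have "\<bar>R t\<bar> \<le> (\<Sum>j\<in>UNIV - {i}. B j * \<bar>w $ j\<bar>)" for t
  proof -
    have "\<bar>R t\<bar> \<le> (\<Sum>j\<in>UNIV - {i}. \<bar>a j (zt t) * w $ j\<bar>)"
      unfolding R_def by (rule sum_abs)
    also have "\<dots> \<le> (\<Sum>j\<in>UNIV - {i}. B j * \<bar>w $ j\<bar>)"
      by (rule sum_mono) (auto simp: abs_mult intro: mult_right_mono B)
    finally show ?thesis .
  qed
  moreover have "continuous_on UNIV R"
    unfolding R_def by (intro continuous_intros a_cont)
  ultimately obtain t where "a i (zt t) * t + R t = s"
    using continuous_coercive_surj[OF a_cont[of i] _ h(1)] h(2) by blast
  then show ?thesis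
    using sum_eq[of t] by (intro exI[of _ "zt t"]) (auto simp: zt_nth)
qed

definition idx :: "nat \<Rightarrow> 'n::{finite,linorder}" where
  "idx k = (THE i. pos i = k)"

definition last_idx :: "'n::{finite,linorder}" where
  "last_idx = Max UNIV"

lemma pos_strict_mono: "(i::'n::{finite,linorder}) < j \<Longrightarrow> pos i < pos j"
  unfolding pos_def by (rule psubset_card_mono) auto

lemma pos_eq_iff [simp]: "pos (i::'n::{finite,linorder}) = pos j \<longleftrightarrow> i = j"
  by (metis linorder_neq_iff pos_strict_mono less_irrefl)

lemma pos_less_card: "pos (i::'n::{finite,linorder}) < CARD('n)"
  unfolding pos_def by (rule psubset_card_mono) auto

lemma range_pos: "range (pos :: 'n::{finite,linorder} \<Rightarrow> nat) = {..<CARD('n)}"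
proof -
  have "inj (pos :: 'n \<Rightarrow> nat)" by (simp add: inj_def)
  then have "card (range (pos :: 'n \<Rightarrow> nat)) = CARD('n)" by (simp add: card_image)
  moreover have "range (pos :: 'n \<Rightarrow> nat) \<subseteq> {..<CARD('n)}" using pos_less_card by auto
  ultimately show ?thesis by (metis card_lessThan card_subset_eq finite_lessThan)
qed

lemma pos_idx [simp]: "k < CARD('n::{finite,linorder}) \<Longrightarrow> pos (idx k :: 'n) = k"
proof -
  assume "k < CARD('n)"
  then obtain i :: 'n where "pos i = k" using range_pos by (metis imageE lessThan_iff)
  then show ?thesis unfolding idx_def by (metis (mono_tags) pos_eq_iff theI)
qed

lemma idx_pos [simp]: "idx (pos (i::'n::{finite,linorder})) = i"
  using pos_idx[OF pos_less_card[of i]] by simp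

lemma pos_first_idx [simp]: "pos (first_idx :: 'n::{finite,linorder}) = 0"
  unfolding pos_def first_idx_def by (auto simp: not_less[symmetric])

lemma pos_last_idx [simp]: "pos (last_idx :: 'n::{finite,linorder}) = CARD('n) - 1"
proof -
  have "{j. j < (last_idx :: 'n)} = UNIV - {last_idx}"
    unfolding last_idx_def by (auto simp: order.not_eq_order_implies_strict)
  then show ?thesis by (simp add: pos_def card_Diff_singleton)
qed

lemma Suc_pos_less_card_iff [simp]: "Suc (pos i) < CARD('n) \<longleftrightarrow> (i::'n::{finite,linorder}) \<noteq> last_idx"
  using pos_less_card[of i] pos_eq_iff[of i last_idx] by (auto simp del: pos_eq_iff)

lemma Suc_pos_eq_card_iff [simp]: "Suc (pos i) = CARD('n) \<longleftrightarrow> (i::'n::{finite,linorder}) = last_idx"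
  using pos_eq_iff[of i last_idx] by (auto simp del: pos_eq_iff)

definition shift :: "real^'n::{finite,linorder} \<Rightarrow> real \<Rightarrow> real^'n::{finite,linorder}" where
  "shift z s = (\<chi> i. if i = last_idx then s else z $ idx (pos i + 1))"

lemma shift_nth: "shift z s $ i = (if i = last_idx then s else z $ idx (pos i + 1))"
  by (simp add: shift_def)

lemma shift_cong:
  fixes z w :: "real^'n::{finite,linorder}"
  assumes "\<And>j. j \<noteq> first_idx \<Longrightarrow> z $ j = w $ j"
  shows "shift z s = shift w s"
proof -
  have "(idx (pos i + 1) :: 'n) \<noteq> first_idx" if "i \<noteq> last_idx" for i :: 'n
  proof
    assume first: "(idx (pos i + 1) :: 'n) = first_idx"
    have "pos i + 1 = pos (idx (pos i + 1) :: 'n)" using that by simp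
    also have "\<dots> = 0" unfolding first by simp
    finally show False by simp
  qed
  then show ?thesis using assms by (simp add: vec_eq_iff shift_nth)
qed

lemma companion_mult_add_lastvec:
  fixes a :: "'n::{finite,linorder} \<Rightarrow> real"
  shows "companion a *v z + u *\<^sub>R lastvec b = shift z ((\<Sum>j\<in>UNIV. a j * z $ j) + u * b)"
proof -
  have "(companion a *v z + u *\<^sub>R lastvec b) $ i = shift z ((\<Sum>j\<in>UNIV. a j * z $ j) + u * b) $ i"
    for i :: 'n
  proof (cases "i = last_idx")
    case False
    then have idx_iff: "pos j = pos i + 1 \<longleftrightarrow> j = idx (pos i + 1)" for j :: 'n
      by (metis Suc_eq_plus1 Suc_pos_less_card_iff pos_eq_iff pos_idx)
    have "(companion a *v z) $ i = (\<Sum>j\<in>UNIV. (if pos j = pos i + 1 then 1 else 0) * z $ j)"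
      using False by (simp add: companion_def matrix_vector_mult_def)
    also have "\<dots> = (\<Sum>j\<in>UNIV. if j = idx (pos i + 1) then z $ j else 0)"
      by (intro sum.cong refl) (use idx_iff in auto)
    also have "\<dots> = z $ idx (pos i + 1)" by simp
    finally show ?thesis using False by (simp add: shift_nth lastvec_def)
  qed (simp add: shift_nth lastvec_def companion_def matrix_vector_mult_def)
  then show ?thesis by (simp add: vec_eq_iff)
qed

lemma ex_shift_eq: "\<exists>w. shift w (z $ last_idx) = (z :: real^'n::{finite,linorder})"
proof
  define w :: "real^'n::{finite,linorder}" where "w = (\<chi> j. if pos j = 0 then 0 else z $ idx (pos j - 1))"
  show "shift w (z $ last_idx) = z"
    by (auto simp: vec_eq_iff shift_nth w_def)
qed

lemma shift_commuting_tail_dependence: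
  fixes T :: "real^'n::{finite,linorder} \<Rightarrow> real^'n::{finite,linorder}"
  assumes comm: "\<And>w s i. i \<noteq> last_idx \<Longrightarrow> T (shift w s) $ i = T w $ idx (pos i + 1)"
  shows "k < CARD('n) \<Longrightarrow> (\<And>j. k \<le> pos j \<Longrightarrow> z $ j = w $ j) \<Longrightarrow> T z $ idx k = T w $ idx k"
proof (induction k arbitrary: z w)
  case 0
  then have "z = w" by (simp add: vec_eq_iff)
  then show ?case by simp
next
  case (Suc k)
  have "Suc (pos (idx k :: 'n)) < CARD('n)" using Suc.prems(1) by simp
  then have k: "(idx k :: 'n) \<noteq> last_idx" by (metis Suc_pos_less_card_iff)
  have pk: "pos (idx k :: 'n) = k" using Suc.prems(1) by simp
  have "T z $ idx (Suc k) = T (shift z 0) $ idx k" using comm[OF k, of z 0] by (simp only: pk Suc_eq_plus1)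
  also have "\<dots> = T (shift w 0) $ idx k"
    using Suc.prems by (intro Suc.IH) (auto simp: shift_nth)
  also have "\<dots> = T w $ idx (Suc k)" using comm[OF k, of w 0] by (simp only: pk Suc_eq_plus1)
  finally show ?case .
qed

lemma shift_commuting_coordinatewise:
  fixes T :: "real^'n::{finite,linorder} \<Rightarrow> real^'n::{finite,linorder}"
  assumes comm: "\<And>w s i. i \<noteq> last_idx \<Longrightarrow> T (shift w s) $ i = T w $ idx (pos i + 1)"
  shows "T z $ i = T (\<chi> _. z $ i) $ last_idx"
proof -
  have "\<forall>z. T z $ idx k = T (\<chi> _. z $ idx k) $ last_idx" if "k \<le> CARD('n) - 1" for k
    using that
  proof (induction k rule: inc_induct)
    case base
    have last: "idx (CARD('n) - 1) = (last_idx :: 'n)" by (metis idx_pos pos_last_idx)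
    have "T z $ last_idx = T (\<chi> _. z $ last_idx) $ last_idx" for z
    proof -
      have agree: "z $ j = (\<chi> _. z $ last_idx) $ j" if "CARD('n) - 1 \<le> pos j" for j :: 'n
      proof -
        have "pos j = pos (last_idx :: 'n)"
          using that pos_less_card[of j] by simp
        then have "j = last_idx" by (simp only: pos_eq_iff)
        then show ?thesis by simp
      qed
      have "T z $ idx (CARD('n) - 1) = T (\<chi> _. z $ last_idx) $ idx (CARD('n) - 1)"
        by (rule shift_commuting_tail_dependence[OF comm]) (blast, simp, fact agree)
      then show ?thesis by (simp only: last)
    qed
    then show ?case unfolding last by blast
  next
    case (step k)
    show ?case
    proof
      fix z :: "real^'n::{finite,linorder}"
      obtain w where w: "shift w (z $ last_idx) = z" using ex_shift_eq by blast
      have "Suc (pos (idx k :: 'n)) < CARD('n)" using step.hyps(2) by simp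
      then have k: "(idx k :: 'n) \<noteq> last_idx" by (metis Suc_pos_less_card_iff)
      have "T z $ idx k = T w $ idx (Suc k)" using comm[OF k, of w "z $ last_idx"] w step.hyps by simp
      also have "\<dots> = T (\<chi> _. w $ idx (Suc k)) $ last_idx" using step.IH by blast
      also have "w $ idx (Suc k) = shift w (z $ last_idx) $ idx k"
        using k step.hyps(2) by (simp add: shift_nth)
      also have "\<dots> = z $ idx k" using w by simp
      finally show "T z $ idx k = T (\<chi> _. z $ idx k) $ last_idx" .
    qed
  qed
  from this[of "pos i"] show ?thesis using pos_less_card[of i] by simp
qed

lemma affine_conjugacy_offset_zero:
  fixes F G :: "'a::real_vector \<Rightarrow> 'a"
  assumes "k \<noteq> 0" and conj: "\<And>z. k *\<^sub>R F z + d = G (k *\<^sub>R z + d)"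
    and "G 0 = 0" and fix_zero: "\<And>z. F z = z \<Longrightarrow> z = 0"
  shows "d = 0"
proof -
  define z0 where "z0 = - (1 / k) *\<^sub>R d"
  have z0: "k *\<^sub>R z0 + d = 0" using \<open>k \<noteq> 0\<close> by (simp add: z0_def)
  then have "k *\<^sub>R F z0 + d = k *\<^sub>R z0 + d" using conj[of z0] \<open>G 0 = 0\<close> by simp
  then have "z0 = 0" using \<open>k \<noteq> 0\<close> fix_zero by simp
  with z0 show ?thesis by simp
qed

locale shift_conjugacy =
  fixes T :: "real^'n::{finite,linorder} \<Rightarrow> real^'n::{finite,linorder}"
    and c \<gamma> \<beta> :: "real^'n::{finite,linorder} \<Rightarrow> real" and r :: real
  assumes radius_pos: "r > 0"
    and conj: "\<And>z v. \<bar>v\<bar> < r \<Longrightarrow> T (shift z (c z + v)) = shift (T z) (\<gamma> z + v * \<beta> z)"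
    and c_surj: "\<And>w s. \<exists>z. c z = s \<and> (\<forall>j. j \<noteq> first_idx \<longrightarrow> z $ j = w $ j)"
begin

lemma commutes_with_shift:
  assumes "i \<noteq> last_idx"
  shows "T (shift w s) $ i = T w $ idx (pos i + 1)"
proof -
  define \<phi> where "\<phi> s = T (shift w s) $ i" for s
  \<comment> \<open>The input only reaches the last coordinate, and the first coordinate, which moves
    c z freely, is discarded by the shift; so \<phi> is locally constant.\<close>
  have \<phi>_loc: "\<phi> (x + v) = \<phi> x" if "\<bar>v\<bar> < r" for x v
  proof -
    obtain z where z: "c z = x" "\<And>j. j \<noteq> first_idx \<Longrightarrow> z $ j = w $ j" using c_surj by blast
    have "\<phi> (x + v) = T z $ idx (pos i + 1)" if "\<bar>v\<bar> < r" for v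
    proof -
      have "\<phi> (x + v) = T (shift z (c z + v)) $ i"
        using z by (simp add: \<phi>_def shift_cong[of z w])
      also have "\<dots> = T z $ idx (pos i + 1)" using conj[OF that] assms by (simp add: shift_nth)
      finally show ?thesis .
    qed
    from this[OF that] this[of 0] show ?thesis using radius_pos by simp
  qed
  have "\<phi> s = \<phi> (c w)"
    by (rule uniformly_locally_constant_imp_constant[OF radius_pos]) (use \<phi>_loc in simp)
  also have "\<dots> = T w $ idx (pos i + 1)"
    using conj[of 0 w] radius_pos assms by (simp add: \<phi>_def shift_nth)
  finally show ?thesis by (simp add: \<phi>_def)
qed

lemma affine:
  "\<exists>k d. (\<forall>z. T z = k *\<^sub>R z + (\<chi> _. d)) \<and> (\<forall>z. \<beta> z = k)"
proof -
  define \<psi> where "\<psi> x = T (\<chi> _. x) $ last_idx" for x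
  have coord: "T z $ i = \<psi> (z $ i)" for z i
    unfolding \<psi>_def by (rule shift_commuting_coordinatewise[OF commutes_with_shift])
  have \<psi>_loc: "\<psi> (c z + v) = \<gamma> z + v * \<beta> z" if "\<bar>v\<bar> < r" for z v
    using conj[OF that, of z] coord[of "shift z (c z + v)" last_idx] by (simp add: shift_nth)
  have "\<exists>k d. \<forall>x. \<psi> x = k * x + d"
  proof (rule uniformly_locally_affine_imp_affine[OF radius_pos])
    fix x
    obtain z where "c z = x" using c_surj by blast
    then show "\<exists>b. \<forall>v. \<bar>v\<bar> < r \<longrightarrow> \<psi> (x + v) = \<psi> x + b * v"
      using \<psi>_loc[of 0 z] \<psi>_loc[of _ z] radius_pos by (intro exI[of _ "\<beta> z"]) auto
  qed
  then obtain k d where kd: "\<And>x. \<psi> x = k * x + d" by blast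
  have "\<beta> z = k" for z
  proof -
    have "\<psi> (c z + r/2) - \<psi> (c z) = r/2 * \<beta> z"
      using \<psi>_loc[of "r/2" z] \<psi>_loc[of 0 z] radius_pos by simp
    then have "r/2 * k = r/2 * \<beta> z" by (simp add: kd algebra_simps)
    then show ?thesis using radius_pos by simp
  qed
  moreover have "T z = k *\<^sub>R z + (\<chi> _. d)" for z using coord kd by (simp add: vec_eq_iff)
  ultimately show ?thesis by blast
qed

end

lemma companion_conjugacy_imp_shift_conjugacy:
  fixes T :: "real^'n::{finite,linorder} \<Rightarrow> real^'n::{finite,linorder}"
  assumes "U > 0" and "h_a > 0" and "h_b > 0"
    and a_cont: "\<And>j. continuous_on UNIV (a j)" and a_bdd: "\<And>j. bounded (range (a j))"
    and a1_low: "\<And>z. \<bar>a first_idx z\<bar> \<ge> h_a" and b_low: "\<And>z. \<bar>b z\<bar> \<ge> h_b"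
    and conj: "\<And>z u. \<bar>u\<bar> < U \<Longrightarrow>
        T (companion (\<lambda>j. a j z) *v z + u *\<^sub>R lastvec (b z)) =
        companion (\<lambda>j. ah j (T z)) *v T z + u *\<^sub>R lastvec (bh (T z))"
  shows "shift_conjugacy T (\<lambda>z. \<Sum>j\<in>UNIV. a j z * z $ j) (\<lambda>z. \<Sum>j\<in>UNIV. ah j (T z) * T z $ j)
           (\<lambda>z. bh (T z) / b z) (U * h_b)"
proof
  show "U * h_b > 0" using assms(1,3) by simp
next
  fix z v assume "\<bar>v\<bar> < U * h_b"
  moreover have "U * h_b \<le> U * \<bar>b z\<bar>" using b_low[of z] \<open>U > 0\<close> by simp
  moreover have b_nz: "b z \<noteq> 0" using b_low[of z] \<open>h_b > 0\<close> by auto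
  ultimately have "\<bar>v / b z\<bar> < U" by (simp add: abs_divide divide_less_eq)
  from conj[OF this, of z] b_nz
  show "T (shift z ((\<Sum>j\<in>UNIV. a j z * z $ j) + v)) =
        shift (T z) ((\<Sum>j\<in>UNIV. ah j (T z) * T z $ j) + v * (bh (T z) / b z))"
    by (simp add: companion_mult_add_lastvec)
next
  show "\<exists>z. (\<Sum>j\<in>UNIV. a j z * z $ j) = s \<and> (\<forall>j. j \<noteq> first_idx \<longrightarrow> z $ j = w $ j)" for w s
    using exists_coordinate_solution[where a = a, OF a_cont a_bdd \<open>h_a > 0\<close> a1_low] by blast
qed

theorem theorem2:
  fixes U h_a h_b hh_b :: real
    and a :: "'n::{finite,linorder} \<Rightarrow> real^'n::{finite,linorder} \<Rightarrow> real"
    and b :: "real^'n::{finite,linorder} \<Rightarrow> real"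
    and g :: "real^'n::{finite,linorder} \<Rightarrow> real^'m::finite"
    and f :: "real^'m \<Rightarrow> real^'n::{finite,linorder}"
    and ah :: "'n \<Rightarrow> real^'n::{finite,linorder} \<Rightarrow> real"
    and bh :: "real^'n::{finite,linorder} \<Rightarrow> real"
  assumes U_pos: "U > 0"
    and dim: "CARD('m) \<ge> CARD('n)"
    and g_inj: "inj g"
    and g_diff: "\<And>z. g differentiable (at z)"
    and a_diff: "\<And>j z. a j differentiable (at z)"
    and b_diff: "\<And>z. b differentiable (at z)"
    and a_bdd: "\<And>j. bounded (range (a j))"
    and b_bdd: "bounded (range b)"
    and h_a_pos: "h_a > 0" and a1_low: "\<And>z. \<bar>a first_idx z\<bar> \<ge> h_a"
    and h_b_pos: "h_b > 0" and b_low: "\<And>z. \<bar>b z\<bar> \<ge> h_b"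
    and fix_unique: "\<And>c. c = companion (\<lambda>j. a j c) *v c \<longleftrightarrow> c = 0"
    and f_diff: "f differentiable_on range g"
    and ah_diff: "\<And>j z. ah j differentiable (at z)"
    and bh_diff: "\<And>z. bh differentiable (at z)"
    and hh_b_pos: "hh_b > 0" and bh_low: "\<And>z. \<bar>bh z\<bar> \<ge> hh_b"
    and optimal: "\<And>z u. \<bar>u\<bar> < U \<Longrightarrow>
        f (g (companion (\<lambda>j. a j z) *v z + u *\<^sub>R lastvec (b z))) =
        companion (\<lambda>j. ah j (f (g z))) *v f (g z) + u *\<^sub>R lastvec (bh (f (g z)))"
  shows "\<exists>\<Delta>b::real. \<Delta>b \<noteq> 0 \<and>
     (\<forall>z. (f \<circ> g) z = \<Delta>b *\<^sub>R z \<and>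
          companion (\<lambda>j. ah j ((f \<circ> g) z)) *v (f \<circ> g) z
            = \<Delta>b *\<^sub>R (companion (\<lambda>j. a j z) *v z) \<and>
          bh ((f \<circ> g) z) = \<Delta>b * b z)"
proof -
  \<comment> \<open>Since the loss vanishes at every state, the only regularity used is continuity and
    boundedness of the a j.\<close>
  define T where "T = f \<circ> g"
  have a_cont: "continuous_on UNIV (a j)" for j
    using a_diff by (simp add: continuous_at_imp_continuous_on differentiable_imp_continuous_within)
  interpret shift_conjugacy T "\<lambda>z. \<Sum>j\<in>UNIV. a j z * z $ j" "\<lambda>z. \<Sum>j\<in>UNIV. ah j (T z) * T z $ j"
      "\<lambda>z. bh (T z) / b z" "U * h_b"
    by (rule companion_conjugacy_imp_shift_conjugacy[where a = a and b = b,
          OF U_pos h_a_pos h_b_pos a_cont a_bdd a1_low b_low])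
       (simp add: T_def optimal)
  obtain k d where T_affine: "\<And>z. T z = k *\<^sub>R z + (\<chi> _. d)" and slope: "\<And>z. bh (T z) / b z = k"
    using affine by blast
  have b_nz: "b z \<noteq> 0" for z using b_low[of z] h_b_pos by auto
  have "k \<noteq> 0" using slope[of 0] bh_low[of "T 0"] hh_b_pos b_nz by auto
  have latent_step: "T (companion (\<lambda>j. a j z) *v z) = companion (\<lambda>j. ah j (T z)) *v T z" for z
    using optimal[of 0 z] U_pos by (simp add: T_def)
  have "(\<chi> _. d) = (0 :: real^'n::{finite,linorder})"
    by (rule affine_conjugacy_offset_zero[OF \<open>k \<noteq> 0\<close>,
          where F = "\<lambda>z. companion (\<lambda>j. a j z) *v z" and G = "\<lambda>y. companion (\<lambda>j. ah j y) *v y"])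
       (simp_all add: latent_step flip: T_affine, metis fix_unique)
  then have T_linear: "T z = k *\<^sub>R z" for z by (simp add: T_affine)
  show ?thesis
    using \<open>k \<noteq> 0\<close> T_linear latent_step slope b_nz by (intro exI[of _ k]) (auto simp: T_def field_simps)
qed

end
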